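(* Let $S_1,S_2\subseteq\mathbb{N}$ be finite nonempty collision-free sets and let $I\subseteq(0,\infty)$ be an open interval. Then $z_{S_1+S_2}^I\leq z_{S_1}^I+z_{S_2}^I$.
   Context: $\mathbb{N}=\{0,1,2,\dots\}$. For a finite nonempty set $S=\{e_1,\dots,e_k\}\subseteq\mathbb{N}$ (distinct elements), let $f_S(x)=\sum_{i=1}^k a_i x^{e_i}$, where $a_1,\dots,a_k$ are independent standard normal random variables. For an open interval $I\subseteq(0,\infty)$, $z_S^I$ denotes the expected number of zeros of $f_S$ in $I$. For $A,B\subseteq\mathbb{N}$, $A+B:=\{a+b: a\in A,b\in B\}$; $A$ and $B$ are collision-free if $|A+B|=|A|\cdot|B|$, i.e. all sums $a+b$ ($a\in A$, $b\in B$) are distinct. *)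

theory Defs
  imports "HOL-Probability.Probability"
begin

definition sumset :: "nat set \<Rightarrow> nat set \<Rightarrow> nat set" where
  "sumset A B = {a + b | a b. a \<in> A \<and> b \<in> B}"

definition collision_free :: "nat set \<Rightarrow> nat set \<Rightarrow> bool" where
  "collision_free A B \<longleftrightarrow> card (sumset A B) = card A * card B"

text \<open>The random polynomial f_S with coefficient vector a (only the values a e for e in S matter).\<close>
definition fpoly :: "nat set \<Rightarrow> (nat \<Rightarrow> real) \<Rightarrow> real \<Rightarrow> real" where
  "fpoly S a x = (\<Sum>e\<in>S. a e * x ^ e)"

text \<open>Number of zeros of f_S(a,.) in I, as an extended nonnegative real (infinite if infinitely many).\<close>
definition num_zeros :: "nat set \<Rightarrow> real set \<Rightarrow> (nat \<Rightarrow> real) \<Rightarrow> ennreal" where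
  "num_zeros S I a = emeasure (count_space UNIV) {x \<in> I. fpoly S a x = 0}"

definition coeff_space :: "nat set \<Rightarrow> (nat \<Rightarrow> real) measure" where
  "coeff_space S = (\<Pi>\<^sub>M e\<in>S. std_normal_distribution)"

definition expected_zeros :: "nat set \<Rightarrow> real set \<Rightarrow> ennreal" where
  "expected_zeros S I = (\<integral>\<^sup>+ a. num_zeros S I a \<partial>coeff_space S)"

end

theory Submission
  imports Defs "HOL-Computational_Algebra.Polynomial"
begin

text \<open>
  Zeros in $I$ are counted through sign changes along the dyadic grids of $I$: for every
  coefficient vector the number of sign changes is at most the number of zeros, and, since almost
  surely all positive zeros are simple, the number of zeros is at most the liminf of the numbers of
  sign changes. By Fatou's lemma it therefore suffices to bound the probability of a sign change
  of $f_{S_1+S_2}$ between two grid points $x$ and $y$. Collision-freeness gives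
  $f_{S_1+S_2}(t) = g(t,t)$ with $g(u,v) = \sum_{e_1 \in S_1, e_2 \in S_2} a_{e_1+e_2} u^{e_1} v^{e_2}$,
  and a sign change of $g$ from $(x,x)$ to $(y,y)$ forces one from $(x,x)$ to $(y,x)$ or from
  $(y,x)$ to $(y,y)$. For fixed $v \neq 0$ the coefficients $\sum_{e_2} v^{e_2} a_{e_1+e_2}$
  ($e_1 \in S_1$) are linear forms in disjoint sets of independent standard Gaussians, hence after
  normalisation again independent standard Gaussians; so $u \mapsto g(u,v)$ changes sign between
  $x$ and $y$ with the same probability as $f_{S_1}$, and symmetrically for $f_{S_2}$.
\<close>

section \<open>Gaussian coefficient vectors\<close>

lemma prob_space_std_normal: "prob_space std_normal_distribution"
  using real_dist_normal_dist real_distribution_def by blast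

lemma prob_space_coeff_space: "prob_space (coeff_space S)"
  unfolding coeff_space_def by (intro prob_space_PiM prob_space_std_normal)

lemma measurable_coeff_space_coordinate:
  "e \<in> S \<Longrightarrow> (\<lambda>a. a e) \<in> measurable (coeff_space S) std_normal_distribution"
  unfolding coeff_space_def by simp

lemma borel_measurable_coeff_space_coordinate:
  "e \<in> S \<Longrightarrow> (\<lambda>a. a e) \<in> borel_measurable (coeff_space S)"
  using measurable_coeff_space_coordinate[of e S]
  by (subst measurable_cong_sets[OF refl, of _ std_normal_distribution]) auto

lemma borel_measurable_linear_form:
  "h ` J \<subseteq> S \<Longrightarrow> (\<lambda>a. \<Sum>j\<in>J. c j * a (h j)) \<in> borel_measurable (coeff_space S)"
  by (intro borel_measurable_sum borel_measurable_times borel_measurable_const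
      borel_measurable_coeff_space_coordinate) auto

lemma borel_measurable_fpoly[measurable]: "(\<lambda>a. fpoly S a x) \<in> borel_measurable (coeff_space S)"
  unfolding fpoly_def using borel_measurable_linear_form[of "\<lambda>e. e" S S "\<lambda>e. x ^ e"]
  by (simp add: mult.commute)

lemma indep_vars_coeff_space_coordinates:
  assumes "S \<noteq> {}"
  shows "prob_space.indep_vars (coeff_space S) (\<lambda>_. std_normal_distribution) (\<lambda>e a. a e) S"
proof -
  interpret P: prob_space "coeff_space S" by (rule prob_space_coeff_space)
  have "distr (coeff_space S) (\<Pi>\<^sub>M e\<in>S. std_normal_distribution) (\<lambda>a. \<lambda>e\<in>S. a e) = coeff_space S"
    unfolding coeff_space_def
    by (subst distr_cong[OF refl refl, where g="\<lambda>a. a"])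
       (auto simp: space_PiM PiE_def extensional_restrict)
  also have "\<dots> = (\<Pi>\<^sub>M e\<in>S. distr (coeff_space S) std_normal_distribution (\<lambda>a. a e))"
    unfolding coeff_space_def
    by (intro PiM_cong refl distr_PiM_component[symmetric] prob_space_std_normal)
  finally show ?thesis
    by (subst P.indep_vars_iff_distr_eq_PiM'[OF assms]) (auto simp: coeff_space_def)
qed

lemma distributed_coeff_space_coordinate:
  assumes "e \<in> S"
  shows "distributed (coeff_space S) lborel (\<lambda>a. a e) std_normal_density"
proof -
  have "distr (coeff_space S) lborel (\<lambda>a. a e)
      = distr (coeff_space S) std_normal_distribution (\<lambda>a. a e)"
    by (rule distr_cong) auto
  also have "\<dots> = std_normal_distribution"
    unfolding coeff_space_def by (rule distr_PiM_component[OF prob_space_std_normal assms])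
  finally show ?thesis
    using borel_measurable_coeff_space_coordinate[OF assms]
    unfolding distributed_def by (auto simp: coeff_space_def)
qed

lemma distributed_unit_linear_form:
  assumes "finite S" "(\<Sum>e\<in>S. (w e)\<^sup>2) = 1"
  shows "distributed (coeff_space S) lborel (\<lambda>a. \<Sum>e\<in>S. w e * a e) std_normal_density"
proof -
  interpret P: prob_space "coeff_space S" by (rule prob_space_coeff_space)
  define S' where "S' = {e\<in>S. w e \<noteq> 0}"
  have sum_S': "(\<Sum>e\<in>S'. f e) = (\<Sum>e\<in>S. f e)" if "\<And>e. w e = 0 \<Longrightarrow> f e = 0" for f :: "nat \<Rightarrow> real"
    using assms(1) that unfolding S'_def by (intro sum.mono_neutral_left) auto
  have unit: "(\<Sum>e\<in>S'. (w e)\<^sup>2) = 1"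
    using sum_S'[of "\<lambda>e. (w e)\<^sup>2"] assms(2) by simp
  then have "S' \<noteq> {}" by auto
  moreover have "S \<noteq> {}" using \<open>S' \<noteq> {}\<close> by (auto simp: S'_def)
  then have "P.indep_vars (\<lambda>_. borel) (\<lambda>e a. w e * a e) S'"
    by (intro P.indep_vars_compose2[where Y="\<lambda>e t. w e * t",
          OF P.indep_vars_subset[OF indep_vars_coeff_space_coordinates]]) (auto simp: S'_def)
  moreover have "distributed (coeff_space S) lborel (\<lambda>a. w e * a e) (normal_density 0 \<bar>w e\<bar>)"
    if "e \<in> S'" for e
  proof -
    have "w e \<noteq> 0" "e \<in> S" using that by (auto simp: S'_def)
    from P.normal_density_affine[OF distributed_coeff_space_coordinate[OF \<open>e \<in> S\<close>] _ \<open>w e \<noteq> 0\<close>, of 0]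
    show ?thesis by simp
  qed
  ultimately have "distributed (coeff_space S) lborel (\<lambda>a. \<Sum>e\<in>S'. w e * a e)
      (normal_density (\<Sum>e\<in>S'. 0) (sqrt (\<Sum>e\<in>S'. \<bar>w e\<bar>\<^sup>2)))"
    using assms(1) by (intro P.sum_indep_normal) (auto simp: S'_def)
  moreover have "(\<lambda>a. \<Sum>e\<in>S'. w e * a e) = (\<lambda>a. \<Sum>e\<in>S. w e * a e)"
    using sum_S' by simp
  ultimately show ?thesis using unit by simp
qed

lemma distr_unit_linear_form_reindex:
  fixes J :: "nat set"
  assumes "finite J" "(\<Sum>j\<in>J. (v j)\<^sup>2) = 1" "inj_on h J" "h ` J \<subseteq> S"
  shows "distr (coeff_space S) lborel (\<lambda>a. \<Sum>j\<in>J. v j * a (h j)) = std_normal_distribution"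
proof -
  let ?restrict = "\<lambda>a. \<lambda>j\<in>J. a (h j)"
  let ?form = "\<lambda>b. \<Sum>j\<in>J. v j * b j"
  have restrict: "distr (coeff_space S) (coeff_space J) ?restrict = coeff_space J"
    unfolding coeff_space_def
    using distr_PiM_reindex[of S "\<lambda>_. std_normal_distribution", OF prob_space_std_normal assms(3)]
      assms(4) by auto
  have "?restrict \<in> measurable (coeff_space S) (coeff_space J)"
    unfolding coeff_space_def[of J] using assms(4)
    by (auto intro!: measurable_restrict measurable_coeff_space_coordinate)
  moreover have "?form \<in> measurable (coeff_space J) lborel"
    unfolding coeff_space_def by simp
  ultimately have "distr (coeff_space S) lborel (?form \<circ> ?restrict)
      = distr (coeff_space J) lborel ?form"
    by (simp add: distr_distr[symmetric] restrict)
  also have "\<dots> = std_normal_distribution"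
    using distributed_distr_eq_density[OF distributed_unit_linear_form[OF assms(1,2)]] by simp
  finally show ?thesis by (simp add: o_def cong: distr_cong)
qed

lemma distr_disjoint_unit_linear_forms:
  fixes J K :: "nat set"
  assumes "finite J" "(\<Sum>j\<in>J. (v j)\<^sup>2) = 1" "K \<noteq> {}"
    and "\<And>k. k \<in> K \<Longrightarrow> inj_on (h k) J" "\<And>k. k \<in> K \<Longrightarrow> h k ` J \<subseteq> S"
    and disjoint: "disjoint_family_on (\<lambda>k. h k ` J) K"
  shows "distr (coeff_space S) (coeff_space K) (\<lambda>a. \<lambda>k\<in>K. \<Sum>j\<in>J. v j * a (h k j))
    = coeff_space K"
proof -
  interpret P: prob_space "coeff_space S" by (rule prob_space_coeff_space)
  let ?Y = "\<lambda>k a. \<Sum>j\<in>J. v j * a (h k j)"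
  obtain k0 where "k0 \<in> K" using assms(3) by blast
  moreover have "J \<noteq> {}" using assms(2) by auto
  ultimately have "S \<noteq> {}" using assms(5) by blast
  have "P.indep_vars (\<lambda>k. \<Pi>\<^sub>M e\<in>h k ` J. std_normal_distribution) (\<lambda>k a. \<lambda>e\<in>h k ` J. a e) K"
    by (rule P.indep_vars_restrict[OF indep_vars_coeff_space_coordinates[OF \<open>S \<noteq> {}\<close>]
          assms(5) disjoint])
  then have "P.indep_vars (\<lambda>_. borel)
      (\<lambda>k a. (\<lambda>b. \<Sum>j\<in>J. v j * b (h k j)) (\<lambda>e\<in>h k ` J. a e)) K"
    by (rule P.indep_vars_compose2) auto
  then have indep: "P.indep_vars (\<lambda>_. borel) ?Y K"
    by (simp cong: sum.cong)
  have measurable: "?Y k \<in> borel_measurable (coeff_space S)" if "k \<in> K" for k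
    using borel_measurable_linear_form[OF assms(5)[OF that]] .
  have "distr (coeff_space S) (coeff_space K) (\<lambda>a. \<lambda>k\<in>K. ?Y k a)
      = distr (coeff_space S) (\<Pi>\<^sub>M k\<in>K. borel) (\<lambda>a. \<lambda>k\<in>K. ?Y k a)"
    unfolding coeff_space_def by (rule distr_cong) (auto intro!: sets_PiM_cong)
  also have "\<dots> = (\<Pi>\<^sub>M k\<in>K. distr (coeff_space S) borel (?Y k))"
    using P.indep_vars_iff_distr_eq_PiM'[OF assms(3) measurable] indep by simp
  also have "\<dots> = coeff_space K"
    unfolding coeff_space_def[of K]
  proof (rule PiM_cong[OF refl])
    fix k assume "k \<in> K"
    have "distr (coeff_space S) borel (?Y k) = distr (coeff_space S) lborel (?Y k)"
      by (rule distr_cong) auto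
    also have "\<dots> = std_normal_distribution"
      using assms \<open>k \<in> K\<close> by (intro distr_unit_linear_form_reindex)
    finally show "distr (coeff_space S) borel (?Y k) = std_normal_distribution" .
  qed
  finally show ?thesis .
qed

lemma sum_power2_normalized:
  fixes w :: "'a \<Rightarrow> real"
  assumes "(\<Sum>j\<in>J. (w j)\<^sup>2) \<noteq> 0"
  shows "(\<Sum>j\<in>J. (w j / sqrt (\<Sum>j\<in>J. (w j)\<^sup>2))\<^sup>2) = 1"
proof -
  have "0 \<le> (\<Sum>j\<in>J. (w j)\<^sup>2)" by (simp add: sum_nonneg)
  then show ?thesis
    using assms by (simp add: power_divide sum_divide_distrib[symmetric])
qed

lemma sum_power2_powers_pos:
  fixes x :: real
  assumes "finite S" "S \<noteq> {}" "x \<noteq> 0"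
  shows "(\<Sum>e\<in>S. (x ^ e)\<^sup>2) > 0"
  using assms by (intro sum_pos) auto

lemma emeasure_std_normal_finite:
  assumes "finite A"
  shows "emeasure std_normal_distribution A = 0"
proof -
  have "A \<in> null_sets lborel" using assms by (rule finite_imp_null_set_lborel)
  then show ?thesis
    by (subst emeasure_density) (auto intro: nn_integral_null_set dest: null_setsD2)
qed

lemma AE_fpoly_nonzero:
  assumes "finite S" "S \<noteq> {}" "x \<noteq> 0"
  shows "AE a in coeff_space S. fpoly S a x \<noteq> 0"
proof (rule AE_I')
  define c where "c = sqrt (\<Sum>e\<in>S. (x ^ e)\<^sup>2)"
  have "c > 0"
    unfolding c_def using sum_power2_powers_pos[OF assms] by simp
  let ?W = "\<lambda>a. \<Sum>e\<in>S. x ^ e / c * a e"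
  have W: "distributed (coeff_space S) lborel ?W std_normal_density"
    using assms sum_power2_normalized[of "\<lambda>e. x ^ e" S] sum_power2_powers_pos[OF assms]
    unfolding c_def by (intro distributed_unit_linear_form) auto
  have fpoly_eq: "fpoly S a x = c * ?W a" for a
    unfolding fpoly_def using \<open>c > 0\<close> by (simp add: sum_distrib_left mult.commute)
  have "{a \<in> space (coeff_space S). fpoly S a x = 0} = ?W -` {0} \<inter> space (coeff_space S)"
    using \<open>c > 0\<close> by (auto simp: fpoly_eq)
  also have "emeasure (coeff_space S) \<dots> = emeasure (distr (coeff_space S) lborel ?W) {0}"
    by (rule emeasure_distr[symmetric, OF distributed_measurable[OF W]]) simp
  also have "\<dots> = emeasure std_normal_distribution {0}"
    using distributed_distr_eq_density[OF W] by simp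
  finally have "emeasure (coeff_space S) {a \<in> space (coeff_space S). fpoly S a x = 0} = 0"
    by (simp add: emeasure_std_normal_finite)
  moreover have "{a \<in> space (coeff_space S). fpoly S a x = 0} \<in> sets (coeff_space S)"
    by measurable
  ultimately show "{a \<in> space (coeff_space S). \<not> fpoly S a x \<noteq> 0} \<in> null_sets (coeff_space S)"
    by (simp add: null_sets_def)
qed simp

section \<open>Coupling of sign changes\<close>

definition sign_change_event :: "nat set \<Rightarrow> real \<Rightarrow> real \<Rightarrow> (nat \<Rightarrow> real) set" where
  "sign_change_event S x y =
    {a \<in> space (coeff_space S). (0 < fpoly S a x) \<noteq> (0 < fpoly S a y)}"

lemma sign_change_event_sets[measurable]: "sign_change_event S x y \<in> sets (coeff_space S)"
  unfolding sign_change_event_def by measurable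

definition mixed_fpoly :: "nat set \<Rightarrow> nat set \<Rightarrow> (nat \<Rightarrow> real) \<Rightarrow> real \<Rightarrow> real \<Rightarrow> real" where
  "mixed_fpoly S1 S2 a x y = (\<Sum>e1\<in>S1. \<Sum>e2\<in>S2. a (e1 + e2) * x ^ e1 * y ^ e2)"

lemma mixed_fpoly_commute: "mixed_fpoly S1 S2 a x y = mixed_fpoly S2 S1 a y x"
  unfolding mixed_fpoly_def by (subst sum.swap) (simp add: ac_simps)

lemma sumset_commute: "sumset S2 S1 = sumset S1 S2"
  unfolding sumset_def by (auto; metis add.commute)

lemma sumset_eq_image: "sumset S1 S2 = (\<lambda>(e1, e2). e1 + e2) ` (S1 \<times> S2)"
  unfolding sumset_def by auto

lemma collision_free_imp_inj_on_add:
  assumes "finite S1" "finite S2" "collision_free S1 S2"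
  shows "inj_on (\<lambda>(e1, e2). e1 + e2) (S1 \<times> S2)"
  using assms unfolding collision_free_def sumset_eq_image
  by (intro eq_card_imp_inj_on) (auto simp: card_cartesian_product)

lemma fpoly_sumset:
  assumes "inj_on (\<lambda>(e1, e2). e1 + e2) (S1 \<times> S2)"
  shows "fpoly (sumset S1 S2) a x = mixed_fpoly S1 S2 a x x"
proof -
  have "fpoly (sumset S1 S2) a x = (\<Sum>(e1, e2)\<in>S1 \<times> S2. a (e1 + e2) * x ^ (e1 + e2))"
    unfolding fpoly_def sumset_eq_image by (subst sum.reindex[OF assms]) (auto simp: case_prod_beta)
  then show ?thesis
    unfolding mixed_fpoly_def sum.cartesian_product by (simp add: power_add mult.assoc)
qed

lemma emeasure_mixed_fpoly_sign_change:
  assumes "S1 \<noteq> {}" "finite S2" "S2 \<noteq> {}"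
    and inj: "inj_on (\<lambda>(e1, e2). e1 + e2) (S1 \<times> S2)" and "y \<noteq> 0"
  shows "emeasure (coeff_space (sumset S1 S2)) {a \<in> space (coeff_space (sumset S1 S2)).
      (0 < mixed_fpoly S1 S2 a x y) \<noteq> (0 < mixed_fpoly S1 S2 a x' y)}
    = emeasure (coeff_space S1) (sign_change_event S1 x x')"
proof -
  let ?T = "sumset S1 S2"
  define c where "c = sqrt (\<Sum>e\<in>S2. (y ^ e)\<^sup>2)"
  have "c > 0"
    unfolding c_def using sum_power2_powers_pos[of S2 y] assms by simp
  define v where "v e = y ^ e / c" for e
  have unit: "(\<Sum>e\<in>S2. (v e)\<^sup>2) = 1"
    unfolding v_def c_def using sum_power2_normalized[of "\<lambda>e. y ^ e" S2] \<open>c > 0\<close> c_def by simp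
  define \<Phi> where "\<Phi> a = (\<lambda>e1\<in>S1. \<Sum>e2\<in>S2. v e2 * a (e1 + e2))" for a
  have shifts: "(+) e1 ` S2 \<subseteq> ?T" if "e1 \<in> S1" for e1
    using that by (auto simp: sumset_def)
  have disjoint: "disjoint_family_on (\<lambda>e1. (+) e1 ` S2) S1"
    using inj unfolding disjoint_family_on_def inj_on_def by fastforce
  have distr_\<Phi>: "distr (coeff_space ?T) (coeff_space S1) \<Phi> = coeff_space S1"
    unfolding \<Phi>_def using assms unit shifts disjoint
    by (intro distr_disjoint_unit_linear_forms) (auto simp: inj_on_def)
  have measurable_\<Phi>: "\<Phi> \<in> measurable (coeff_space ?T) (coeff_space S1)"
    unfolding \<Phi>_def[abs_def] coeff_space_def[of S1]
    using borel_measurable_linear_form[OF shifts]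
    by (intro measurable_restrict) (auto cong: measurable_cong_sets)
  have mixed_eq: "mixed_fpoly S1 S2 a w y = c * fpoly S1 (\<Phi> a) w" for a w
    unfolding mixed_fpoly_def fpoly_def \<Phi>_def v_def using \<open>c > 0\<close>
    by (simp add: sum_distrib_left sum_distrib_right ac_simps)
  have "{a \<in> space (coeff_space ?T). (0 < mixed_fpoly S1 S2 a x y) \<noteq> (0 < mixed_fpoly S1 S2 a x' y)}
      = \<Phi> -` sign_change_event S1 x x' \<inter> space (coeff_space ?T)"
    using measurable_space[OF measurable_\<Phi>] \<open>c > 0\<close>
    unfolding sign_change_event_def mixed_eq by (auto simp: zero_less_mult_iff)
  then show ?thesis
    using emeasure_distr[OF measurable_\<Phi> sign_change_event_sets, of x x'] distr_\<Phi> by simp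
qed

lemma emeasure_sign_change_sumset_le:
  assumes "finite S1" "S1 \<noteq> {}" "finite S2" "S2 \<noteq> {}"
    and inj: "inj_on (\<lambda>(e1, e2). e1 + e2) (S1 \<times> S2)" and "x \<noteq> 0" "y \<noteq> 0"
  shows "emeasure (coeff_space (sumset S1 S2)) (sign_change_event (sumset S1 S2) x y)
    \<le> emeasure (coeff_space S1) (sign_change_event S1 x y)
      + emeasure (coeff_space S2) (sign_change_event S2 x y)"
proof -
  let ?P = "coeff_space (sumset S1 S2)"
  have inj': "inj_on (\<lambda>(e1, e2). e1 + e2) (S2 \<times> S1)"
    using inj unfolding inj_on_def by (auto simp: add.commute)
  define A1 where "A1 = {a \<in> space ?P.
    (0 < mixed_fpoly S1 S2 a x x) \<noteq> (0 < mixed_fpoly S1 S2 a y x)}"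
  define A2 where "A2 = {a \<in> space ?P.
    (0 < mixed_fpoly S2 S1 a x y) \<noteq> (0 < mixed_fpoly S2 S1 a y y)}"
  have [measurable]: "(\<lambda>a. mixed_fpoly S1 S2 a x y) \<in> borel_measurable ?P" for x y
    unfolding mixed_fpoly_def
    by (intro borel_measurable_sum borel_measurable_times borel_measurable_const
        borel_measurable_coeff_space_coordinate) (auto simp: sumset_def)
  then have [measurable]: "(\<lambda>a. mixed_fpoly S2 S1 a x y) \<in> borel_measurable ?P" for x y
    by (simp add: mixed_fpoly_commute[of S2 S1])
  have "sign_change_event (sumset S1 S2) x y \<subseteq> A1 \<union> A2"
    unfolding sign_change_event_def A1_def A2_def fpoly_sumset[OF inj]
    by (auto simp: mixed_fpoly_commute[of S2 S1])
  then have "emeasure ?P (sign_change_event (sumset S1 S2) x y) \<le> emeasure ?P (A1 \<union> A2)"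
    unfolding A1_def A2_def by (intro emeasure_mono) measurable
  also have "\<dots> \<le> emeasure ?P A1 + emeasure ?P A2"
    unfolding A1_def A2_def by (intro emeasure_subadditive) measurable
  also have "emeasure ?P A1 = emeasure (coeff_space S1) (sign_change_event S1 x y)"
    unfolding A1_def using assms by (intro emeasure_mixed_fpoly_sign_change)
  also have "emeasure ?P A2 = emeasure (coeff_space S2) (sign_change_event S2 x y)"
    using emeasure_mixed_fpoly_sign_change[OF assms(4,1,2) inj' \<open>y \<noteq> 0\<close>, of x y]
      sumset_commute[of S1 S2]
    unfolding A2_def by simp
  finally show ?thesis .
qed

section \<open>Counting zeros by sign changes\<close>

definition sign_changes :: "(real \<Rightarrow> real) \<Rightarrow> real list \<Rightarrow> nat" where
  "sign_changes f L = card {i. Suc i < length L \<and> (0 < f (L ! i)) \<noteq> (0 < f (L ! Suc i))}"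

lemma sign_change_imp_zero_between:
  fixes f :: "real \<Rightarrow> real"
  assumes "continuous_on {p..q} f" "p < q" "f p \<noteq> 0" "f q \<noteq> 0" "(0 < f p) \<noteq> (0 < f q)"
  shows "\<exists>z. p < z \<and> z < q \<and> f z = 0"
proof -
  have "\<exists>z. p \<le> z \<and> z \<le> q \<and> f z = 0"
  proof (cases "f p < 0")
    case True
    then show ?thesis using assms IVT'[of f p 0 q] by auto
  next
    case False
    then show ?thesis using assms IVT2'[of f q 0 p] by auto
  qed
  then obtain z where "p \<le> z" "z \<le> q" "f z = 0" by blast
  moreover have "z \<noteq> p" "z \<noteq> q" using assms(3,4) \<open>f z = 0\<close> by auto
  ultimately show ?thesis by (intro exI[of _ z]) auto
qed

lemma card_le_emeasure_points_between:
  fixes L :: "'a::linorder list"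
  assumes "sorted_wrt (<) L"
    and between: "\<And>i. i \<in> Idx \<Longrightarrow> Suc i < length L \<and> (\<exists>z\<in>Z. L ! i < z \<and> z < L ! Suc i)"
  shows "of_nat (card Idx) \<le> emeasure (count_space UNIV) Z"
proof -
  have "\<forall>i\<in>Idx. \<exists>z. z \<in> Z \<and> L ! i < z \<and> z < L ! Suc i" using between by blast
  then obtain z where "\<forall>i\<in>Idx. z i \<in> Z \<and> L ! i < z i \<and> z i < L ! Suc i"
    by (rule bchoice[elim_format]) blast
  note z = this[rule_format]
  have less: "z i < z j" if "i \<in> Idx" "j \<in> Idx" "i < j" for i j
  proof -
    have "Suc j < length L" using between[OF that(2)] by blast
    have "z i < L ! Suc i" using z[OF that(1)] by blast
    also have "L ! Suc i \<le> L ! j"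
      using that(3) \<open>Suc j < length L\<close>
      by (intro sorted_nth_mono[OF strict_sorted_imp_sorted[OF assms(1)]]) auto
    also have "L ! j < z j" using z[OF that(2)] by blast
    finally show ?thesis .
  qed
  have "inj_on z Idx"
  proof (rule inj_onI)
    fix i j assume "i \<in> Idx" "j \<in> Idx" "z i = z j"
    then show "i = j" using less[of i j] less[of j i] by (cases i j rule: linorder_cases) auto
  qed
  moreover have "Idx \<subseteq> {..<length L}"
  proof
    fix i assume "i \<in> Idx"
    then show "i \<in> {..<length L}" using between[of i] by simp
  qed
  then have "finite Idx" by (rule finite_subset) simp
  ultimately have "of_nat (card Idx) = emeasure (count_space UNIV) (z ` Idx)"
    by (simp add: card_image)
  also have "\<dots> \<le> emeasure (count_space UNIV) Z"
    using z by (intro emeasure_mono) auto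
  finally show ?thesis .
qed

lemma sign_changes_le_zeros:
  fixes f :: "real \<Rightarrow> real"
  assumes "continuous_on I f" "is_interval I" "sorted_wrt (<) L" "set L \<subseteq> I"
    and nonzero: "\<forall>x\<in>set L. f x \<noteq> 0"
  shows "of_nat (sign_changes f L) \<le> emeasure (count_space UNIV) {x\<in>I. f x = 0}"
  unfolding sign_changes_def
proof (rule card_le_emeasure_points_between[OF assms(3)])
  fix i assume "i \<in> {i. Suc i < length L \<and> (0 < f (L ! i)) \<noteq> (0 < f (L ! Suc i))}"
  then have i: "Suc i < length L" "(0 < f (L ! i)) \<noteq> (0 < f (L ! Suc i))" by simp_all
  have "L ! i \<in> I" "L ! Suc i \<in> I" using assms(4) i(1) by auto
  then have between: "{L ! i..L ! Suc i} \<subseteq> I"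
    using interval_subset_is_interval[OF assms(2), of "L ! i" "L ! Suc i"] by (simp add: cbox_interval)
  have "\<exists>z. L ! i < z \<and> z < L ! Suc i \<and> f z = 0"
  proof (rule sign_change_imp_zero_between)
    show "continuous_on {L ! i..L ! Suc i} f" using assms(1) between by (rule continuous_on_subset)
    show "L ! i < L ! Suc i" using sorted_wrt_nth_less[OF assms(3)] i(1) by blast
    show "f (L ! i) \<noteq> 0" "f (L ! Suc i) \<noteq> 0" using nonzero i(1) by auto
  qed (use i in simp)
  then show "Suc i < length L \<and> (\<exists>z\<in>{x \<in> I. f x = 0}. L ! i < z \<and> z < L ! Suc i)"
    using between i(1) by fastforce
qed

lemma exists_adjacent_change:
  assumes "j < k" "k < length L" "P (L ! j) \<noteq> P (L ! k)"
  shows "\<exists>i. j \<le> i \<and> i < k \<and> P (L ! i) \<noteq> P (L ! Suc i)"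
  using assms
proof (induction k)
  case (Suc k)
  show ?case
  proof (cases "P (L ! k) = P (L ! Suc k)")
    case True
    with Suc.prems have "j < k" "P (L ! j) \<noteq> P (L ! k)" by (auto simp: less_Suc_eq)
    then obtain i where "j \<le> i" "i < k" "P (L ! i) \<noteq> P (L ! Suc i)"
      using Suc.IH Suc.prems(2) by auto
    then show ?thesis by (intro exI[of _ i]) auto
  next
    case False
    then show ?thesis using Suc.prems by (intro exI[of _ k]) auto
  qed
qed simp

definition crosses_zero_within :: "(real \<Rightarrow> real) \<Rightarrow> real \<Rightarrow> real \<Rightarrow> bool" where
  "crosses_zero_within f z d \<longleftrightarrow>
    (\<forall>h h'. 0 < h \<longrightarrow> h < d \<longrightarrow> 0 < h' \<longrightarrow> h' < d \<longrightarrow> (0 < f (z - h)) \<noteq> (0 < f (z + h')))"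

lemma crosses_zero_within_mono:
  "crosses_zero_within f z d \<Longrightarrow> d' \<le> d \<Longrightarrow> crosses_zero_within f z d'"
  unfolding crosses_zero_within_def by auto

lemma simple_zero_crosses_zero:
  fixes f :: "real \<Rightarrow> real"
  assumes "f z = 0" "(f has_real_derivative f') (at z)" "f' \<noteq> 0"
  shows "\<exists>d>0. crosses_zero_within f z d"
proof -
  have "\<exists>d>0. \<forall>h. 0 < h \<longrightarrow> h < d \<longrightarrow> (0 < f (z + h)) = (0 < f') \<and> (0 < f (z - h)) = (f' < 0)"
  proof (cases "f' > 0")
    case True
    obtain d1 where "d1 > 0" "\<forall>h>0. h < d1 \<longrightarrow> f z < f (z + h)"
      using DERIV_pos_inc_right[OF assms(2) True] by blast
    moreover obtain d2 where "d2 > 0" "\<forall>h>0. h < d2 \<longrightarrow> f (z - h) < f z"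
      using DERIV_pos_inc_left[OF assms(2) True] by blast
    ultimately show ?thesis
      using True assms(1) by (intro exI[of _ "min d1 d2"]) auto
  next
    case False
    then have "f' < 0" using assms(3) by simp
    obtain d1 where "d1 > 0" "\<forall>h>0. h < d1 \<longrightarrow> f z > f (z + h)"
      using DERIV_neg_dec_right[OF assms(2) \<open>f' < 0\<close>] by blast
    moreover obtain d2 where "d2 > 0" "\<forall>h>0. h < d2 \<longrightarrow> f (z - h) > f z"
      using DERIV_neg_dec_left[OF assms(2) \<open>f' < 0\<close>] by blast
    ultimately show ?thesis
      using \<open>f' < 0\<close> assms(1) by (intro exI[of _ "min d1 d2"]) auto
  qed
  then obtain d where "d > 0"
    and signs: "\<And>h. 0 < h \<Longrightarrow> h < d \<Longrightarrow> (0 < f (z + h)) = (0 < f') \<and> (0 < f (z - h)) = (f' < 0)"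
    by blast
  have "crosses_zero_within f z d"
    unfolding crosses_zero_within_def
  proof (intro allI impI)
    fix h h' :: real assume "0 < h" "h < d" "0 < h'" "h' < d"
    then show "(0 < f (z - h)) \<noteq> (0 < f (z + h'))"
      using signs[of h] signs[of h'] assms(3) by auto
  qed
  with \<open>d > 0\<close> show ?thesis by blast
qed

definition dyadics :: "nat \<Rightarrow> real set" where
  "dyadics n = (\<lambda>k::int. of_int k / 2 ^ n) ` {- (int n * 2 ^ n) .. int n * 2 ^ n}"

definition dyadic_grid :: "real set \<Rightarrow> nat \<Rightarrow> real list" where
  "dyadic_grid I n = sorted_list_of_set (I \<inter> dyadics n)"

lemma set_dyadic_grid: "set (dyadic_grid I n) = I \<inter> dyadics n"
  unfolding dyadic_grid_def dyadics_def by simp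

lemma sorted_wrt_dyadic_grid: "sorted_wrt (<) (dyadic_grid I n)"
  unfolding dyadic_grid_def by (rule strict_sorted_list_of_set)

lemma dyadic_in_dyadics:
  assumes "\<bar>of_int k / 2 ^ n\<bar> \<le> real n"
  shows "of_int k / 2 ^ n \<in> dyadics n"
proof -
  have "\<bar>real_of_int k\<bar> \<le> real_of_int (int n * 2 ^ n)"
    using assms by (simp add: abs_divide divide_le_eq)
  then have "\<bar>k\<bar> \<le> int n * 2 ^ n" by linarith
  then show ?thesis unfolding dyadics_def by (intro imageI) auto
qed

lemma dyadic_neighbours:
  fixes z :: real
  assumes "\<bar>z\<bar> + 1 / 2 ^ n \<le> real n"
  obtains p q where "p \<in> dyadics n" "q \<in> dyadics n"
    "z - 1 / 2 ^ n \<le> p" "p < z" "z < q" "q \<le> z + 1 / 2 ^ n"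
proof -
  define t :: real where "t = 2 ^ n"
  have "t > 0" unfolding t_def by simp
  define p where "p = of_int (\<lceil>z * t\<rceil> - 1) / t"
  define q where "q = of_int (\<lfloor>z * t\<rfloor> + 1) / t"
  have "z * t - 1 \<le> of_int (\<lceil>z * t\<rceil> - 1)" "of_int (\<lceil>z * t\<rceil> - 1) < z * t"
    by linarith+
  then have p: "z - 1 / t \<le> p" "p < z"
    unfolding p_def using \<open>t > 0\<close> by (simp_all add: field_simps)
  have "z * t < of_int (\<lfloor>z * t\<rfloor> + 1)" "of_int (\<lfloor>z * t\<rfloor> + 1) \<le> z * t + 1"
    by linarith+
  then have q: "z < q" "q \<le> z + 1 / t"
    unfolding q_def using \<open>t > 0\<close> by (simp_all add: field_simps)
  have "\<bar>p\<bar> \<le> real n" "\<bar>q\<bar> \<le> real n"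
    using p q assms unfolding t_def by (auto simp: abs_le_iff)
  then have "p \<in> dyadics n" "q \<in> dyadics n"
    unfolding p_def q_def t_def by (simp_all only: dyadic_in_dyadics)
  with p q show thesis unfolding t_def by (intro that)
qed

lemma dyadic_grid_sign_change_near:
  fixes f :: "real \<Rightarrow> real"
  assumes "{z - \<delta><..<z + \<delta>} \<subseteq> I" "1 / 2 ^ n < \<delta>" "\<bar>z\<bar> + \<delta> \<le> real n"
    and crosses: "crosses_zero_within f z \<delta>"
  obtains i where "Suc i < length (dyadic_grid I n)"
    "(0 < f (dyadic_grid I n ! i)) \<noteq> (0 < f (dyadic_grid I n ! Suc i))"
    "\<bar>dyadic_grid I n ! i - z\<bar> < \<delta>"
proof -
  let ?L = "dyadic_grid I n"
  have "\<bar>z\<bar> + 1 / 2 ^ n \<le> real n" using assms(2,3) by linarith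
  then obtain p q where pq: "p \<in> dyadics n" "q \<in> dyadics n"
    "z - 1 / 2 ^ n \<le> p" "p < z" "z < q" "q \<le> z + 1 / 2 ^ n"
    by (rule dyadic_neighbours)
  have "p \<in> {z - \<delta><..<z + \<delta>}" "q \<in> {z - \<delta><..<z + \<delta>}"
    using pq(3-6) assms(2) by simp_all
  then have "p \<in> set ?L" "q \<in> set ?L"
    using pq(1,2) assms(1) unfolding set_dyadic_grid by blast+
  then obtain j k where j: "j < length ?L" "?L ! j = p" and k: "k < length ?L" "?L ! k = q"
    by (auto simp: in_set_conv_nth)
  have sorted: "sorted ?L" using sorted_wrt_dyadic_grid by (rule strict_sorted_imp_sorted)
  have "j < k"
  proof (rule ccontr)
    assume "\<not> j < k"
    then have "q \<le> p" using sorted_nth_mono[OF sorted, of k j] j k by simp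
    then show False using pq by simp
  qed
  have "(0 < f (z - (z - p))) \<noteq> (0 < f (z + (q - z)))"
    using crosses[unfolded crosses_zero_within_def, rule_format, of "z - p" "q - z"] pq(3-6) assms(2)
    by linarith
  then obtain i where i: "j \<le> i" "i < k" "(0 < f (?L ! i)) \<noteq> (0 < f (?L ! Suc i))"
    using exists_adjacent_change[of j k ?L "\<lambda>x. 0 < f x"] \<open>j < k\<close> j k by auto
  have "p \<le> ?L ! i" "?L ! i \<le> q"
    using sorted_nth_mono[OF sorted, of j i] sorted_nth_mono[OF sorted, of i k] i j k by auto
  then have "\<bar>?L ! i - z\<bar> < \<delta>" using pq assms(2) by (simp add: abs_less_iff)
  moreover have "Suc i < length ?L" using i k by simp
  ultimately show thesis using i by (intro that)
qed

lemma card_le_sign_changes_dyadic_grid: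
  fixes f :: "real \<Rightarrow> real"
  assumes "finite Z" "1 / 2 ^ n < \<delta>"
    and crossing: "\<And>z. z \<in> Z \<Longrightarrow>
      {z - \<delta><..<z + \<delta>} \<subseteq> I \<and> crosses_zero_within f z \<delta> \<and> \<bar>z\<bar> + \<delta> \<le> real n"
    and separated: "\<And>z z'. z \<in> Z \<Longrightarrow> z' \<in> Z \<Longrightarrow> z \<noteq> z' \<Longrightarrow> 2 * \<delta> \<le> \<bar>z - z'\<bar>"
  shows "card Z \<le> sign_changes f (dyadic_grid I n)"
proof -
  let ?L = "dyadic_grid I n"
  define Idx where "Idx = {i. Suc i < length ?L \<and> (0 < f (?L ! i)) \<noteq> (0 < f (?L ! Suc i))}"
  have "\<exists>i. i \<in> Idx \<and> \<bar>?L ! i - z\<bar> < \<delta>" if z: "z \<in> Z" for z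
  proof -
    obtain i where "Suc i < length ?L" "(0 < f (?L ! i)) \<noteq> (0 < f (?L ! Suc i))"
      "\<bar>?L ! i - z\<bar> < \<delta>"
      using dyadic_grid_sign_change_near[of z \<delta> I n f] crossing[OF z] assms(2) by metis
    then show ?thesis unfolding Idx_def by blast
  qed
  then obtain idx where idx: "\<And>z. z \<in> Z \<Longrightarrow> idx z \<in> Idx \<and> \<bar>?L ! idx z - z\<bar> < \<delta>"
    by metis
  have "inj_on idx Z"
  proof (rule inj_onI, rule ccontr)
    fix z z' assume "z \<in> Z" "z' \<in> Z" "idx z = idx z'" "z \<noteq> z'"
    then have "\<bar>?L ! idx z - z\<bar> < \<delta>" "\<bar>?L ! idx z - z'\<bar> < \<delta>" "2 * \<delta> \<le> \<bar>z - z'\<bar>"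
      using idx[of z] idx[of z'] separated[of z z'] by auto
    then show False by linarith
  qed
  moreover have "finite Idx" unfolding Idx_def by (rule finite_subset[of _ "{..<length ?L}"]) auto
  ultimately have "card Z \<le> card Idx"
    using idx by (intro card_inj_on_le) auto
  then show ?thesis unfolding sign_changes_def Idx_def .
qed

lemma simple_zero_crosses_zero_in_open:
  fixes f :: "real \<Rightarrow> real"
  assumes "open I" "z \<in> I" "f z = 0" "(f has_real_derivative f') (at z)" "f' \<noteq> 0"
  shows "\<exists>r>0. {z - r<..<z + r} \<subseteq> I \<and> crosses_zero_within f z r"
proof -
  obtain d where "d > 0" "crosses_zero_within f z d"
    using simple_zero_crosses_zero[OF assms(3-5)] by blast
  moreover obtain \<epsilon> where "\<epsilon> > 0" "ball z \<epsilon> \<subseteq> I"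
    using assms(1,2) openE by blast
  moreover have "{z - min d \<epsilon><..<z + min d \<epsilon>} \<subseteq> ball z \<epsilon>"
    by (auto simp: dist_real_def abs_less_iff)
  ultimately show ?thesis
    by (intro exI[of _ "min d \<epsilon>"]) (auto intro: crosses_zero_within_mono)
qed

lemma uniform_crossing_radius:
  fixes f :: "real \<Rightarrow> real"
  assumes "finite Z" "\<And>z. z \<in> Z \<Longrightarrow> \<exists>r>0. {z - r<..<z + r} \<subseteq> I \<and> crosses_zero_within f z r"
  obtains \<delta> where "\<delta> > 0" "\<And>z. z \<in> Z \<Longrightarrow> {z - \<delta><..<z + \<delta>} \<subseteq> I \<and> crosses_zero_within f z \<delta>"
    "\<And>z z'. z \<in> Z \<Longrightarrow> z' \<in> Z \<Longrightarrow> z \<noteq> z' \<Longrightarrow> 2 * \<delta> \<le> \<bar>z - z'\<bar>"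
proof -
  obtain r where r: "\<And>z. z \<in> Z \<Longrightarrow> r z > 0 \<and> {z - r z<..<z + r z} \<subseteq> I \<and> crosses_zero_within f z (r z)"
    using assms(2) by metis
  define D where "D = insert 1 (r ` Z \<union> (\<lambda>(z, z'). \<bar>z - z'\<bar> / 2) ` {(z, z') \<in> Z \<times> Z. z \<noteq> z'})"
  have "finite {(z, z') \<in> Z \<times> Z. z \<noteq> z'}"
    by (rule finite_subset[rotated, OF finite_cartesian_product[OF assms(1) assms(1)]]) auto
  then have "finite D" unfolding D_def using assms(1) by blast
  show thesis
  proof (rule that[of "Min D"])
    show "Min D > 0" using \<open>finite D\<close> r unfolding D_def by (auto simp: Min_gr_iff)
    show "{z - Min D<..<z + Min D} \<subseteq> I \<and> crosses_zero_within f z (Min D)" if "z \<in> Z" for z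
    proof -
      have "Min D \<le> r z" using that unfolding D_def by (intro Min_le[OF \<open>finite D\<close>[unfolded D_def]]) auto
      then show ?thesis using r[OF that] by (auto intro: crosses_zero_within_mono)
    qed
    show "2 * Min D \<le> \<bar>z - z'\<bar>" if "z \<in> Z" "z' \<in> Z" "z \<noteq> z'" for z z'
    proof -
      have "Min D \<le> \<bar>z - z'\<bar> / 2"
        unfolding D_def using that
        by (intro Min_le[OF \<open>finite D\<close>[unfolded D_def]] insertI2 UnI2 rev_image_eqI[of "(z, z')"]) auto
      then show ?thesis by simp
    qed
  qed
qed

lemma emeasure_zeros_le_liminf_sign_changes:
  fixes f f' :: "real \<Rightarrow> real"
  assumes "open I" and finite_zeros: "finite {x\<in>I. f x = 0}"
    and deriv: "\<And>x. x \<in> I \<Longrightarrow> (f has_real_derivative f' x) (at x)"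
    and simple: "\<And>x. x \<in> I \<Longrightarrow> f x = 0 \<Longrightarrow> f' x \<noteq> 0"
  shows "emeasure (count_space UNIV) {x\<in>I. f x = 0}
    \<le> liminf (\<lambda>n. of_nat (sign_changes f (dyadic_grid I n)))"
proof -
  define Z where "Z = {x\<in>I. f x = 0}"
  have "finite Z" using finite_zeros unfolding Z_def .
  moreover have "\<exists>r>0. {z - r<..<z + r} \<subseteq> I \<and> crosses_zero_within f z r" if "z \<in> Z" for z
    using that simple_zero_crosses_zero_in_open[OF assms(1) _ _ deriv simple] unfolding Z_def by blast
  ultimately obtain \<delta> where "\<delta> > 0"
    and crossing: "\<And>z. z \<in> Z \<Longrightarrow> {z - \<delta><..<z + \<delta>} \<subseteq> I \<and> crosses_zero_within f z \<delta>"
    and separated: "\<And>z z'. z \<in> Z \<Longrightarrow> z' \<in> Z \<Longrightarrow> z \<noteq> z' \<Longrightarrow> 2 * \<delta> \<le> \<bar>z - z'\<bar>"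
    using uniform_crossing_radius by metis
  have "\<forall>\<^sub>F n in sequentially. (1/2::real) ^ n < \<delta>"
    using LIMSEQ_realpow_zero[of "1/2::real"] \<open>\<delta> > 0\<close> by (auto dest: order_tendstoD)
  moreover have "\<forall>\<^sub>F n in sequentially. \<forall>z\<in>Z. \<bar>z\<bar> + \<delta> \<le> real n"
    using \<open>finite Z\<close> filterlim_real_sequentially
    by (intro eventually_ball_finite) (auto simp: filterlim_at_top)
  ultimately have "\<forall>\<^sub>F n in sequentially.
      of_nat (card Z) \<le> (of_nat (sign_changes f (dyadic_grid I n)) :: ennreal)"
  proof eventually_elim
    case (elim n)
    then have "card Z \<le> sign_changes f (dyadic_grid I n)"
      using crossing separated
      by (intro card_le_sign_changes_dyadic_grid[OF \<open>finite Z\<close>]) (auto simp: power_one_over)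
    then show ?case by simp
  qed
  then have "of_nat (card Z) \<le> liminf (\<lambda>n. of_nat (sign_changes f (dyadic_grid I n)) :: ennreal)"
    by (rule Liminf_bounded)
  then show ?thesis using \<open>finite Z\<close> unfolding Z_def by simp
qed

section \<open>Almost surely all positive zeros are simple\<close>

definition fder :: "nat set \<Rightarrow> (nat \<Rightarrow> real) \<Rightarrow> real \<Rightarrow> real" where
  "fder S a x = (\<Sum>e\<in>S. a e * (of_nat e * x ^ (e - 1)))"

lemma has_real_derivative_fpoly: "(fpoly S a has_real_derivative fder S a x) (at x)"
  unfolding fpoly_def[abs_def] fder_def
  by (auto intro!: derivative_eq_intros sum.cong)

lemma continuous_on_fpoly: "continuous_on A (fpoly S a)"
  unfolding fpoly_def[abs_def] by (intro continuous_intros)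

lemma continuous_on_fder: "continuous_on A (fder S a)"
  unfolding fder_def[abs_def] by (intro continuous_intros)

lemma borel_measurable_fder[measurable]: "(\<lambda>a. fder S a x) \<in> borel_measurable (coeff_space S)"
  unfolding fder_def
  using borel_measurable_linear_form[of "\<lambda>e. e" S S "\<lambda>e. of_nat e * x ^ (e - 1)"]
  by (simp add: mult.commute)

lemma finite_zeros_fpoly:
  assumes "finite S" "e \<in> S" "a e \<noteq> 0"
  shows "finite {x. fpoly S a x = 0}"
proof -
  define p where "p = (\<Sum>e\<in>S. monom (a e) e)"
  have "poly p = fpoly S a"
    unfolding p_def fpoly_def by (simp add: poly_sum poly_monom fun_eq_iff)
  moreover have "coeff p e = a e"
    unfolding p_def using assms(1,2) by (simp add: coeff_sum)
  then have "p \<noteq> 0" using assms(3) by auto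
  ultimately show ?thesis using poly_roots_finite[of p] by simp
qed

lemma fpoly_fun_upd:
  assumes "finite S" "e \<in> S"
  shows "fpoly S (a(e := c)) x = c * x ^ e + fpoly (S - {e}) a x"
proof -
  have "fpoly S (a(e := c)) x = c * x ^ e + (\<Sum>e'\<in>S - {e}. (a(e := c)) e' * x ^ e')"
    unfolding fpoly_def by (subst sum.remove[OF assms]) simp
  also have "(\<Sum>e'\<in>S - {e}. (a(e := c)) e' * x ^ e') = fpoly (S - {e}) a x"
    unfolding fpoly_def by (intro sum.cong) auto
  finally show ?thesis .
qed

lemma euler_fpoly_fder:
  "x * fder S a x - of_nat e0 * fpoly S a x = fpoly S (\<lambda>e. (of_nat e - of_nat e0) * a e) x"
proof -
  have "x * (a e * (of_nat e * x ^ (e - 1))) - of_nat e0 * (a e * x ^ e)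
      = (of_nat e - of_nat e0) * a e * x ^ e" for e
    by (cases e) (simp_all add: algebra_simps)
  then show ?thesis
    unfolding fder_def fpoly_def sum_distrib_left sum_subtractf[symmetric] by simp
qed

text \<open>At a double zero $x \neq 0$, Euler's relation $x f'(x) - e_0 f(x) = 0$ is a polynomial
  equation for $x$ that does not involve the coefficient $a_{e_0}$; the zero $x$ then determines
  $a_{e_0}$ through $f(x) = 0$.\<close>

lemma finite_coefficients_with_double_zero:
  assumes "finite S" "e0 \<in> S"
  shows "finite {c. \<exists>x>0. fpoly S (r(e0 := c)) x = 0 \<and> fder S (r(e0 := c)) x = 0}"
proof -
  define b where "b e = (of_nat e - of_nat e0) * r e" for e
  have euler: "fpoly S b x = 0" and coefficient: "c = - fpoly (S - {e0}) r x / x ^ e0"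
    if "x > 0" "fpoly S (r(e0 := c)) x = 0" "fder S (r(e0 := c)) x = 0" for c x
  proof -
    have "(\<lambda>e. (of_nat e - of_nat e0) * (r(e0 := c)) e) = b" by (auto simp: b_def)
    then show "fpoly S b x = 0" using euler_fpoly_fder[of x S "r(e0 := c)" e0] that by simp
    show "c = - fpoly (S - {e0}) r x / x ^ e0"
      using that fpoly_fun_upd[OF assms, of r c x] by (simp add: field_simps)
  qed
  show ?thesis
  proof (cases "\<exists>e\<in>S. b e \<noteq> 0")
    case True
    then have "finite {x. fpoly S b x = 0}"
      using assms(1) finite_zeros_fpoly by blast
    moreover have "{c. \<exists>x>0. fpoly S (r(e0 := c)) x = 0 \<and> fder S (r(e0 := c)) x = 0}
        \<subseteq> (\<lambda>x. - fpoly (S - {e0}) r x / x ^ e0) ` {x. fpoly S b x = 0}"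
      using euler coefficient by blast
    ultimately show ?thesis using finite_surj by blast
  next
    case False
    then have "r e = 0" if "e \<in> S - {e0}" for e
      using that by (auto simp: b_def)
    then have "fpoly (S - {e0}) r x = 0" for x
      unfolding fpoly_def by simp
    then have "{c. \<exists>x>0. fpoly S (r(e0 := c)) x = 0 \<and> fder S (r(e0 := c)) x = 0} \<subseteq> {0}"
      using coefficient by auto
    then show ?thesis using finite_subset by blast
  qed
qed

lemma ex_zero_iff_rational_approx:
  fixes h :: "real \<Rightarrow> real"
  assumes "\<alpha> < \<beta>" "continuous_on {\<alpha>..\<beta>} h" "\<And>x. 0 \<le> h x"
  shows "(\<exists>x\<in>{\<alpha>..\<beta>}. h x = 0) \<longleftrightarrow>
    (\<forall>k::nat. \<exists>q\<in>\<rat> \<inter> {\<alpha>..\<beta>}. h q < inverse (real (Suc k)))"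
proof
  assume "\<exists>x\<in>{\<alpha>..\<beta>}. h x = 0"
  then obtain x where x: "x \<in> {\<alpha>..\<beta>}" "h x = 0" by blast
  show "\<forall>k::nat. \<exists>q\<in>\<rat> \<inter> {\<alpha>..\<beta>}. h q < inverse (real (Suc k))"
  proof
    fix k :: nat
    have "inverse (real (Suc k)) > 0" by simp
    then obtain d where "d > 0"
      and d: "\<forall>y\<in>{\<alpha>..\<beta>}. dist y x < d \<longrightarrow> dist (h y) (h x) < inverse (real (Suc k))"
      using assms(2) x(1) unfolding continuous_on_iff by blast
    have "max \<alpha> (x - d) < min \<beta> (x + d)" using assms(1) x(1) \<open>d > 0\<close> by auto
    then obtain q where "q \<in> \<rat>" "max \<alpha> (x - d) < q" "q < min \<beta> (x + d)"
      using Rats_dense_in_real by blast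
    with d x(2) show "\<exists>q\<in>\<rat> \<inter> {\<alpha>..\<beta>}. h q < inverse (real (Suc k))"
      by (intro bexI[of _ q]) (auto simp: dist_real_def abs_of_nonneg[OF assms(3)])
  qed
next
  assume approx: "\<forall>k::nat. \<exists>q\<in>\<rat> \<inter> {\<alpha>..\<beta>}. h q < inverse (real (Suc k))"
  obtain l where l: "l \<in> {\<alpha>..\<beta>}" "\<And>y. y \<in> {\<alpha>..\<beta>} \<Longrightarrow> h l \<le> h y"
    using continuous_attains_inf[OF compact_Icc _ assms(2)] assms(1) by auto
  have "h l \<le> 0"
  proof (rule ccontr)
    assume "\<not> h l \<le> 0"
    then obtain k where k: "inverse (real (Suc k)) < h l" using reals_Archimedean[of "h l"] by auto
    obtain q where "q \<in> {\<alpha>..\<beta>}" "h q < inverse (real (Suc k))" using approx by blast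
    then show False using l(2)[of q] k by linarith
  qed
  then have "h l = 0" using assms(3)[of l] by linarith
  with l(1) show "\<exists>x\<in>{\<alpha>..\<beta>}. h x = 0" by blast
qed

lemma sets_coeff_space_double_zero:
  assumes "\<alpha> < \<beta>"
  shows "{a \<in> space (coeff_space S). \<exists>x\<in>{\<alpha>..\<beta>}. fpoly S a x = 0 \<and> fder S a x = 0}
    \<in> sets (coeff_space S)"
proof -
  let ?h = "\<lambda>a x. \<bar>fpoly S a x\<bar> + \<bar>fder S a x\<bar>"
  have "(\<exists>x\<in>{\<alpha>..\<beta>}. fpoly S a x = 0 \<and> fder S a x = 0) \<longleftrightarrow> (\<exists>x\<in>{\<alpha>..\<beta>}. ?h a x = 0)" for a
    by (simp add: add_nonneg_eq_0_iff)
  also have "\<dots> a \<longleftrightarrow> (\<forall>k::nat. \<exists>q\<in>\<rat> \<inter> {\<alpha>..\<beta>}. ?h a q < inverse (real (Suc k)))" for a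
    using assms by (intro ex_zero_iff_rational_approx continuous_intros
        continuous_on_fpoly continuous_on_fder) auto
  finally have eq: "{a \<in> space (coeff_space S). \<exists>x\<in>{\<alpha>..\<beta>}. fpoly S a x = 0 \<and> fder S a x = 0}
      = (\<Inter>k. \<Union>q\<in>\<rat> \<inter> {\<alpha>..\<beta>}. {a \<in> space (coeff_space S). ?h a q < inverse (real (Suc k))})"
    by auto
  have "countable (\<rat> \<inter> {\<alpha>..\<beta>})"
    using countable_rat by (rule countable_subset[rotated]) auto
  then have "(\<Union>q\<in>\<rat> \<inter> {\<alpha>..\<beta>}. {a \<in> space (coeff_space S). ?h a q < inverse (real (Suc k))})
      \<in> sets (coeff_space S)" for k
    by (intro sets.countable_UN'') measurable
  then show ?thesis
    unfolding eq by (intro sets.countable_INT') auto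
qed

text \<open>Fubini over the coordinate $e$: each section is a finite, hence Gaussian-null, set.\<close>

lemma null_sets_coeff_space_finite_sections:
  assumes "B \<in> sets (coeff_space S)" "e \<in> S" "\<And>r. finite {c. r(e := c) \<in> B}"
  shows "B \<in> null_sets (coeff_space S)"
proof -
  let ?R = "S - {e}"
  let ?M = "std_normal_distribution \<Otimes>\<^sub>M coeff_space ?R"
  let ?\<Phi> = "\<lambda>(c, r). r(e := c)"
  have S: "insert e ?R = S" using assms(2) by auto
  have distr: "distr ?M (coeff_space S) ?\<Phi> = coeff_space S"
    using distr_pair_PiM_eq_PiM[of ?R "\<lambda>_. std_normal_distribution" e] prob_space_std_normal
    unfolding coeff_space_def S by simp
  have measurable: "?\<Phi> \<in> measurable ?M (coeff_space S)"
  proof -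
    have "(\<lambda>p. (\<lambda>(r, c). r(e := c)) (snd p, fst p))
        \<in> measurable ?M (\<Pi>\<^sub>M e\<in>insert e ?R. std_normal_distribution)"
      unfolding coeff_space_def by measurable
    then show ?thesis unfolding coeff_space_def S by (simp add: case_prod_beta)
  qed
  interpret pair_sigma_finite std_normal_distribution "coeff_space ?R"
    by (intro pair_sigma_finite.intro prob_space_imp_sigma_finite
        prob_space_std_normal prob_space_coeff_space)
  have "emeasure (coeff_space S) B = emeasure ?M (?\<Phi> -` B \<inter> space ?M)"
    by (subst distr[symmetric]) (rule emeasure_distr[OF measurable assms(1)])
  also have "\<dots> = (\<integral>\<^sup>+ r. emeasure std_normal_distribution
      ((\<lambda>c. (c, r)) -` (?\<Phi> -` B \<inter> space ?M)) \<partial>coeff_space ?R)"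
    by (intro emeasure_pair_measure_alt2 measurable_sets[OF measurable assms(1)])
  also have "\<dots> = (\<integral>\<^sup>+ r. 0 \<partial>coeff_space ?R)"
  proof (rule nn_integral_cong)
    fix r
    have "(\<lambda>c. (c, r)) -` (?\<Phi> -` B \<inter> space ?M) \<subseteq> {c. r(e := c) \<in> B}" by auto
    then show "emeasure std_normal_distribution ((\<lambda>c. (c, r)) -` (?\<Phi> -` B \<inter> space ?M)) = 0"
      using assms(3) by (intro emeasure_std_normal_finite) (rule finite_subset)
  qed
  finally show ?thesis using assms(1) by (intro null_setsI) simp_all
qed

lemma pos_real_in_bounded_range:
  fixes x :: real
  assumes "x > 0"
  obtains m :: nat where "x \<in> {1 / (real m + 2)..real m + 2}"
proof
  define m where "m = nat \<lceil>x + 1 / x\<rceil>"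
  have "x + 1 / x \<le> real m" unfolding m_def by linarith
  moreover have "0 < 1 / x" using assms by simp
  ultimately have "x \<le> real m + 2" "1 / x \<le> real m + 2" using assms by linarith+
  then show "x \<in> {1 / (real m + 2)..real m + 2}" using assms by (simp add: divide_le_eq mult.commute)
qed

lemma AE_simple_positive_zeros:
  assumes "finite S" "S \<noteq> {}"
  shows "AE a in coeff_space S. \<forall>x>0. fpoly S a x = 0 \<longrightarrow> fder S a x \<noteq> 0"
proof (rule AE_I')
  define B where "B m = {a \<in> space (coeff_space S).
    \<exists>x\<in>{1 / (real m + 2)..real m + 2}. fpoly S a x = 0 \<and> fder S a x = 0}" for m :: nat
  obtain e where "e \<in> S" using assms(2) by blast
  have "B m \<in> null_sets (coeff_space S)" for m
  proof (rule null_sets_coeff_space_finite_sections[OF _ \<open>e \<in> S\<close>])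
    have "1 / (real m + 2) < 1" by simp
    also have "1 < real m + 2" by simp
    finally have "1 / (real m + 2) < real m + 2" .
    then show "B m \<in> sets (coeff_space S)" unfolding B_def by (rule sets_coeff_space_double_zero)
    fix r
    have "{c. r(e := c) \<in> B m}
        \<subseteq> {c. \<exists>x>0. fpoly S (r(e := c)) x = 0 \<and> fder S (r(e := c)) x = 0}"
    proof
      fix c assume "c \<in> {c. r(e := c) \<in> B m}"
      then obtain x where x: "1 / (real m + 2) \<le> x" "fpoly S (r(e := c)) x = 0" "fder S (r(e := c)) x = 0"
        unfolding B_def by auto
      moreover have "0 < x" using order.strict_trans2[OF _ x(1)] by simp
      ultimately show "c \<in> {c. \<exists>x>0. fpoly S (r(e := c)) x = 0 \<and> fder S (r(e := c)) x = 0}"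
        by (intro CollectI exI[of _ x]) simp
    qed
    then show "finite {c. r(e := c) \<in> B m}"
      by (rule finite_subset) (rule finite_coefficients_with_double_zero[OF assms(1) \<open>e \<in> S\<close>])
  qed
  then show "(\<Union>m. B m) \<in> null_sets (coeff_space S)" by blast
  show "{a \<in> space (coeff_space S). \<not> (\<forall>x>0. fpoly S a x = 0 \<longrightarrow> fder S a x \<noteq> 0)} \<subseteq> (\<Union>m. B m)"
  proof
    fix a assume "a \<in> {a \<in> space (coeff_space S). \<not> (\<forall>x>0. fpoly S a x = 0 \<longrightarrow> fder S a x \<noteq> 0)}"
    then obtain x where a: "a \<in> space (coeff_space S)" and x: "x > 0" "fpoly S a x = 0" "fder S a x = 0"
      by blast
    obtain m where "x \<in> {1 / (real m + 2)..real m + 2}" using pos_real_in_bounded_range[OF x(1)] .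
    then have "a \<in> B m" unfolding B_def using a x by blast
    then show "a \<in> (\<Union>m. B m)" by blast
  qed
qed

section \<open>Expected number of zeros\<close>

lemma sign_changes_eq_sum:
  "sign_changes f L = (\<Sum>i<length L - 1. if (0 < f (L ! i)) \<noteq> (0 < f (L ! Suc i)) then 1 else 0)"
proof -
  have "{i. Suc i < length L \<and> (0 < f (L ! i)) \<noteq> (0 < f (L ! Suc i))}
      = {i\<in>{..<length L - 1}. (0 < f (L ! i)) \<noteq> (0 < f (L ! Suc i))}"
    by auto
  then show ?thesis unfolding sign_changes_def by (simp add: sum.inter_filter[symmetric])
qed

lemma borel_measurable_sign_changes[measurable]:
  "(\<lambda>a. of_nat (sign_changes (fpoly S a) L) :: ennreal) \<in> borel_measurable (coeff_space S)"
  unfolding sign_changes_eq_sum by measurable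

lemma nn_integral_sign_changes:
  "(\<integral>\<^sup>+ a. of_nat (sign_changes (fpoly S a) L) \<partial>coeff_space S)
    = (\<Sum>i<length L - 1. emeasure (coeff_space S) (sign_change_event S (L ! i) (L ! Suc i)))"
proof -
  have "(\<integral>\<^sup>+ a. of_nat (sign_changes (fpoly S a) L) \<partial>coeff_space S)
      = (\<integral>\<^sup>+ a. (\<Sum>i<length L - 1. indicator (sign_change_event S (L ! i) (L ! Suc i)) a) \<partial>coeff_space S)"
  proof (rule nn_integral_cong)
    fix a assume "a \<in> space (coeff_space S)"
    then show "of_nat (sign_changes (fpoly S a) L)
        = (\<Sum>i<length L - 1. indicator (sign_change_event S (L ! i) (L ! Suc i)) a :: ennreal)"
      unfolding sign_changes_eq_sum of_nat_sum by (intro sum.cong) (auto simp: sign_change_event_def)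
  qed
  also have "\<dots> = (\<Sum>i<length L - 1. emeasure (coeff_space S) (sign_change_event S (L ! i) (L ! Suc i)))"
    by (subst nn_integral_sum) auto
  finally show ?thesis .
qed

lemma nn_integral_sign_changes_le_expected_zeros:
  assumes "finite S" "S \<noteq> {}" "is_interval I" "sorted_wrt (<) L" "set L \<subseteq> I" "0 \<notin> set L"
  shows "(\<integral>\<^sup>+ a. of_nat (sign_changes (fpoly S a) L) \<partial>coeff_space S) \<le> expected_zeros S I"
  unfolding expected_zeros_def num_zeros_def
proof (rule nn_integral_mono_AE)
  have "AE a in coeff_space S. \<forall>x\<in>set L. fpoly S a x \<noteq> 0"
    using assms by (intro AE_finite_allI AE_fpoly_nonzero) auto
  then show "AE a in coeff_space S. of_nat (sign_changes (fpoly S a) L)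
      \<le> emeasure (count_space UNIV) {x \<in> I. fpoly S a x = 0}"
    by eventually_elim (intro sign_changes_le_zeros continuous_on_fpoly assms(3-5))
qed

lemma nn_integral_sign_changes_sumset_le:
  assumes "finite S1" "S1 \<noteq> {}" "finite S2" "S2 \<noteq> {}"
    and "inj_on (\<lambda>(e1, e2). e1 + e2) (S1 \<times> S2)" and "0 \<notin> set L"
  shows "(\<integral>\<^sup>+ a. of_nat (sign_changes (fpoly (sumset S1 S2) a) L) \<partial>coeff_space (sumset S1 S2))
    \<le> (\<integral>\<^sup>+ a. of_nat (sign_changes (fpoly S1 a) L) \<partial>coeff_space S1)
      + (\<integral>\<^sup>+ a. of_nat (sign_changes (fpoly S2 a) L) \<partial>coeff_space S2)"
  unfolding nn_integral_sign_changes sum.distrib[symmetric]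
proof (rule sum_mono)
  fix i assume "i \<in> {..<length L - 1}"
  then have "L ! i \<in> set L" "L ! Suc i \<in> set L" by auto
  then have "L ! i \<noteq> 0" "L ! Suc i \<noteq> 0" using assms(6) by auto
  then show "emeasure (coeff_space (sumset S1 S2)) (sign_change_event (sumset S1 S2) (L ! i) (L ! Suc i))
      \<le> emeasure (coeff_space S1) (sign_change_event S1 (L ! i) (L ! Suc i))
        + emeasure (coeff_space S2) (sign_change_event S2 (L ! i) (L ! Suc i))"
    using assms by (intro emeasure_sign_change_sumset_le) auto
qed

lemma expected_zeros_le_liminf_sign_changes:
  assumes "finite S" "S \<noteq> {}" "open I" "I \<subseteq> {0<..}"
  shows "expected_zeros S I
    \<le> liminf (\<lambda>n. \<integral>\<^sup>+ a. of_nat (sign_changes (fpoly S a) (dyadic_grid I n)) \<partial>coeff_space S)"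
proof -
  have "AE a in coeff_space S. emeasure (count_space UNIV) {x \<in> I. fpoly S a x = 0}
      \<le> liminf (\<lambda>n. of_nat (sign_changes (fpoly S a) (dyadic_grid I n)))"
    using AE_simple_positive_zeros[OF assms(1,2)]
  proof eventually_elim
    case (elim a)
    have "\<exists>e\<in>S. a e \<noteq> 0"
    proof (rule ccontr)
      assume "\<not> (\<exists>e\<in>S. a e \<noteq> 0)"
      then have "fpoly S a 1 = 0" "fder S a 1 = 0" unfolding fpoly_def fder_def by auto
      with elim show False by auto
    qed
    then have "finite {x \<in> I. fpoly S a x = 0}"
      using finite_zeros_fpoly[OF assms(1)] by (auto intro: finite_subset)
    then show ?case
      using elim assms(4)
      by (intro emeasure_zeros_le_liminf_sign_changes[OF assms(3), where f'="fder S a"]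
          has_real_derivative_fpoly) auto
  qed
  then have "expected_zeros S I
      \<le> (\<integral>\<^sup>+ a. liminf (\<lambda>n. of_nat (sign_changes (fpoly S a) (dyadic_grid I n))) \<partial>coeff_space S)"
    unfolding expected_zeros_def num_zeros_def by (rule nn_integral_mono_AE)
  also have "\<dots> \<le> liminf (\<lambda>n. \<integral>\<^sup>+ a. of_nat (sign_changes (fpoly S a) (dyadic_grid I n)) \<partial>coeff_space S)"
    by (intro nn_integral_liminf borel_measurable_sign_changes)
  finally show ?thesis .
qed

theorem lemma3p8:
  fixes S1 S2 :: "nat set" and I :: "real set"
  assumes "finite S1" "S1 \<noteq> {}" "finite S2" "S2 \<noteq> {}"
    and "collision_free S1 S2"
    and "is_interval I" "open I" "I \<subseteq> {0<..}"
  shows "expected_zeros (sumset S1 S2) I \<le> expected_zeros S1 I + expected_zeros S2 I"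
proof -
  let ?T = "sumset S1 S2"
  let ?E = "\<lambda>S n. \<integral>\<^sup>+ a. of_nat (sign_changes (fpoly S a) (dyadic_grid I n)) \<partial>coeff_space S"
  have inj: "inj_on (\<lambda>(e1, e2). e1 + e2) (S1 \<times> S2)"
    using assms(1,3,5) by (rule collision_free_imp_inj_on_add)
  have "finite ?T" "?T \<noteq> {}"
    using assms(1-4) unfolding sumset_eq_image by auto
  then have "expected_zeros ?T I \<le> liminf (?E ?T)"
    using assms(7,8) by (rule expected_zeros_le_liminf_sign_changes)
  also have "\<dots> \<le> liminf (\<lambda>n. expected_zeros S1 I + expected_zeros S2 I)"
  proof (intro Liminf_mono always_eventually allI)
    fix n
    have grid: "sorted_wrt (<) (dyadic_grid I n)" "set (dyadic_grid I n) \<subseteq> I"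
      "0 \<notin> set (dyadic_grid I n)"
      using assms(8) by (auto simp: sorted_wrt_dyadic_grid set_dyadic_grid)
    have "?E ?T n \<le> ?E S1 n + ?E S2 n"
      using assms(1-4) inj grid(3) by (rule nn_integral_sign_changes_sumset_le)
    also have "\<dots> \<le> expected_zeros S1 I + expected_zeros S2 I"
      using assms grid by (intro add_mono nn_integral_sign_changes_le_expected_zeros)
    finally show "?E ?T n \<le> expected_zeros S1 I + expected_zeros S2 I" .
  qed
  also have "\<dots> = expected_zeros S1 I + expected_zeros S2 I"
    by (rule Liminf_const) simp
  finally show ?thesis .
qed

end
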